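(* Fix an instance and a feasible schedule $S$ (e.g. an optimum schedule) with $|S|$ scheduled jobs. With respect to the random hierarchical decomposition (random offset $r_0$ uniform in $[0,T/q]$), the expected number of jobs of $S$ that are position-crossing is at most $\frac{1}{q}|S|=O(\varepsilon^2|S|)$.
   Context: Jobs $j$ have integer release time $r_j$, deadline $d_j$ and processing time $p_j$ in $[0,T]$. Fix $\varepsilon>0$ with $q=1/\varepsilon^2$ an integer, $k=\log_q T$ (assume $T$ is a power of $q$), and $\ell_i=T/q^{i+1}$ for $i\ge0$. Random hierarchical decomposition: pick $r_0$ uniformly at random in $[0,T/q]$; for each $0\le i\le k$, the partition $I_i$ of $[0,T]$ consists of the intervals between consecutive points of $\{0,T\}\cup(\{r_0+s\ell_i:s\in\mathbb{Z}\}\cap(0,T))$. In a schedule, a job $j$ occupies its position, the interval $[s_j,s_j+p_j]$ where $s_j$ is its start time. A scheduled job $j$ is position-crossing if $\ell_i\le p_j<\ell_{i-1}$ for some $2\le i\le k+1$ and its position intersects (in a set of positive length) more than one interval of $I_{i-2}$. *)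

theory Defs
  imports "HOL-Probability.Probability"
begin

definition ell :: "nat \<Rightarrow> nat \<Rightarrow> nat \<Rightarrow> real" where
  "ell T q i = real T / real q ^ (i + 1)"

definition grid_points :: "nat \<Rightarrow> nat \<Rightarrow> real \<Rightarrow> nat \<Rightarrow> real set" where
  "grid_points T q r0 i =
     {0, real T} \<union> ({x. \<exists>s::int. x = r0 + of_int s * ell T q i} \<inter> {0<..<real T})"

definition partition_level :: "nat \<Rightarrow> nat \<Rightarrow> real \<Rightarrow> nat \<Rightarrow> real set set" where
  "partition_level T q r0 i =
     {{a..b} | a b. a \<in> grid_points T q r0 i \<and> b \<in> grid_points T q r0 i \<and> a < b \<and>
                    (\<forall>x\<in>grid_points T q r0 i. \<not> (a < x \<and> x < b))}"

definition position :: "('j \<Rightarrow> real) \<Rightarrow> ('j \<Rightarrow> int) \<Rightarrow> 'j \<Rightarrow> real set" where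
  "position s p j = {s j .. s j + of_int (p j)}"

definition position_crossing ::
  "nat \<Rightarrow> nat \<Rightarrow> nat \<Rightarrow> real \<Rightarrow> ('j \<Rightarrow> real) \<Rightarrow> ('j \<Rightarrow> int) \<Rightarrow> 'j \<Rightarrow> bool" where
  "position_crossing T q k r0 s p j \<longleftrightarrow>
     (\<exists>i. 2 \<le> i \<and> i \<le> k + 1 \<and> ell T q i \<le> of_int (p j) \<and> of_int (p j) < ell T q (i - 1) \<and>
        (\<exists>A\<in>partition_level T q r0 (i - 2). \<exists>B\<in>partition_level T q r0 (i - 2). A \<noteq> B \<and>
            measure lborel (position s p j \<inter> A) > 0 \<and> measure lborel (position s p j \<inter> B) > 0))"

definition valid_instance :: "nat \<Rightarrow> 'j set \<Rightarrow> ('j \<Rightarrow> int) \<Rightarrow> ('j \<Rightarrow> int) \<Rightarrow> ('j \<Rightarrow> int) \<Rightarrow> bool" where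
  "valid_instance T J r d p \<longleftrightarrow> finite J \<and>
     (\<forall>j\<in>J. 0 \<le> r j \<and> r j \<le> int T \<and> 0 \<le> d j \<and> d j \<le> int T \<and> 0 \<le> p j \<and> p j \<le> int T)"

definition feasible_schedule ::
  "nat \<Rightarrow> 'j set \<Rightarrow> ('j \<Rightarrow> int) \<Rightarrow> ('j \<Rightarrow> int) \<Rightarrow> ('j \<Rightarrow> int) \<Rightarrow> 'j set \<Rightarrow> ('j \<Rightarrow> nat) \<Rightarrow> ('j \<Rightarrow> real) \<Rightarrow> bool" where
  "feasible_schedule m J r d p S mach s \<longleftrightarrow> S \<subseteq> J \<and>
     (\<forall>j\<in>S. mach j < m \<and> of_int (r j) \<le> s j \<and> s j + of_int (p j) \<le> of_int (d j)) \<and>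
     (\<forall>j\<in>S. \<forall>j'\<in>S. j \<noteq> j' \<and> mach j = mach j' \<longrightarrow>
         s j + of_int (p j) \<le> s j' \<or> s j' + of_int (p j') \<le> s j)"

end

theory Submission
  imports Defs
begin

text \<open>A job whose length lies in [ell_i, ell_(i-1)) can only cross at level i - 2, and it does so
  exactly when a breakpoint r0 + z ell_(i-2) falls strictly inside its position. As r0 ranges over
  [0, T/q], which consists of q^(i-2) periods of that grid, the offsets producing such a breakpoint
  have measure at most p_j per period, i.e. a fraction p_j / ell_(i-2) < ell_(i-1) / ell_(i-2) = 1/q.
  Linearity of expectation over the jobs of S gives the bound.\<close>

definition lattice_point_between :: "real \<Rightarrow> real \<Rightarrow> real \<Rightarrow> real \<Rightarrow> bool" where
  "lattice_point_between L r0 a b \<longleftrightarrow> (\<exists>z::int. a < r0 + of_int z * L \<and> r0 + of_int z * L < b)"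

lemma open_lattice_point_between: "open {r0. lattice_point_between L r0 a b}"
  unfolding lattice_point_between_def
  by (intro open_Collect_ex open_Collect_conj open_Collect_less continuous_intros)

lemma measure_lattice_point_between_le:
  fixes L p a :: real and N :: nat
  assumes L: "L > 0" and N: "N \<ge> 1" and p: "0 < p" "p < L"
  shows "measure lborel ({0..real N * L} \<inter> {x. lattice_point_between L x a (a + p)}) \<le> real N * p"
proof -
  define f where "f = \<lfloor>a / L\<rfloor>"
  define c where "c = a - of_int f * L"
  have c: "0 \<le> c" "c < L"
  proof -
    have "of_int f \<le> a / L" "a / L < of_int f + 1" unfolding f_def by linarith+
    then have "of_int f * L \<le> a" "a < (of_int f + 1) * L" using L by (auto simp: field_simps)
    then show "0 \<le> c" "c < L" unfolding c_def by (auto simp: algebra_simps)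
  qed
  \<comment> \<open>Inside [0, N L] the offsets form the windows (c + t L, c + t L + p), t = -1, ..., N - 1;
      the two truncated end windows have total length at most p.\<close>
  define W where "W = {0..max 0 (c + p - L)}"
  define I where "I t = {c + real t * L .. c + real t * L + p}" for t :: nat
  define Z where "Z = {c + real (N - 1) * L .. c + real (N - 1) * L + min p (L - c)}"
  let ?E = "{0..real N * L} \<inter> {x. lattice_point_between L x a (a + p)}"
  have "?E \<subseteq> W \<union> (\<Union>t<N - 1. I t) \<union> Z"
  proof
    fix x assume "x \<in> ?E"
    then obtain z :: int where z: "a < x + of_int z * L" "x + of_int z * L < a + p"
      and x: "0 \<le> x" "x \<le> real N * L"
      unfolding lattice_point_between_def by (auto simp: algebra_simps)
    define t where "t = f - z"
    have t: "c + of_int t * L < x" "x < c + of_int t * L + p"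
      using z unfolding c_def t_def by (auto simp: algebra_simps)
    have "-2 * L < of_int t * L" "of_int t * L < real N * L" using t x c p by linarith+
    then have "-2 < real_of_int t" "real_of_int t < real N"
      using mult_less_cancel_right_pos[OF L] by (metis mult_minus_left)+
    then consider "t = -1" | "t = int N - 1" | "0 \<le> t" "t < int N - 1" by linarith
    then show "x \<in> W \<union> (\<Union>t<N - 1. I t) \<union> Z"
    proof cases
      case 1
      then show ?thesis using t x unfolding W_def by auto
    next
      case 2
      then have "real_of_int t = real (N - 1)" "real N * L = real (N - 1) * L + L"
        using N by (simp_all add: of_nat_diff algebra_simps)
      then show ?thesis using t x unfolding Z_def by auto
    next
      case 3
      then have "x \<in> I (nat t)" "nat t < N - 1" using t unfolding I_def by auto
      then show ?thesis by blast
    qed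
  qed
  then have "measure lborel ?E \<le> measure lborel (W \<union> (\<Union>t<N - 1. I t) \<union> Z)"
    using open_lattice_point_between[of L a "a + p"]
    by (intro measure_mono_fmeasurable) (auto simp: W_def I_def Z_def intro!: fmeasurable_compact)
  also have "\<dots> \<le> measure lborel W + measure lborel (\<Union>t<N - 1. I t) + measure lborel Z"
    using measure_Un_le[of W lborel "\<Union>t<N - 1. I t"]
      measure_Un_le[of "W \<union> (\<Union>t<N - 1. I t)" lborel Z]
    by (auto simp: W_def I_def Z_def)
  also have "measure lborel (\<Union>t<N - 1. I t) \<le> (\<Sum>t<N - 1. measure lborel (I t))"
    by (rule measure_UNION_le) (auto simp: I_def)
  also have "\<dots> = real (N - 1) * p"
    using p by (simp add: I_def)
  also have "measure lborel W + real (N - 1) * p + measure lborel Z = real N * p"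
    using N p c by (auto simp: W_def Z_def of_nat_diff algebra_simps max_def min_def)
  finally show ?thesis by simp
qed

lemma measure_Int_atLeastAtMost_pos_iff:
  fixes a b c d :: real
  shows "0 < measure lborel ({a..b} \<inter> {c..d}) \<longleftrightarrow> max a c < min b d"
proof -
  have "{a..b} \<inter> {c..d} = {max a c..min b d}" by auto
  then show ?thesis by (cases "max a c \<le> min b d") auto
qed

lemma lattice_gap:
  fixes L r0 :: real and z w :: int
  assumes "L > 0"
  shows "\<not> (r0 + of_int z * L < r0 + of_int w * L \<and> r0 + of_int w * L < r0 + of_int z * L + L)"
proof
  assume "r0 + of_int z * L < r0 + of_int w * L \<and> r0 + of_int w * L < r0 + of_int z * L + L"
  then have "of_int z * L < of_int w * L" "of_int w * L < of_int (z + 1) * L"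
    by (auto simp: algebra_simps)
  then have "z < w" "w < z + 1" using assms by simp_all
  then show False by simp
qed

lemma grid_points_cases:
  assumes "x \<in> grid_points T q r0 i"
  obtains "x = 0" | "x = real T"
    | z :: int where "x = r0 + of_int z * ell T q i" "0 < x" "x < real T"
  using assms unfolding grid_points_def by auto

lemma lattice_point_in_grid_points:
  "x = r0 + of_int z * ell T q i \<Longrightarrow> 0 < x \<Longrightarrow> x < real T \<Longrightarrow> x \<in> grid_points T q r0 i"
  unfolding grid_points_def by auto

lemma cells_around_lattice_point:
  fixes T q i :: nat and r0 g :: real and z :: int
  defines "L \<equiv> ell T q i"
  assumes L: "L > 0" and g: "g = r0 + of_int z * L" "0 < g" "g < real T"
  shows "{max 0 (g - L)..g} \<in> partition_level T q r0 i"
    and "{g..min (real T) (g + L)} \<in> partition_level T q r0 i"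
proof -
  let ?G = "grid_points T q r0 i"
  have gG: "g \<in> ?G" using g lattice_point_in_grid_points unfolding L_def by blast
  have pred: "g - L = r0 + of_int (z - 1) * ell T q i"
    and succ: "g + L = r0 + of_int (z + 1) * ell T q i"
    using g(1) unfolding L_def by (simp_all add: algebra_simps)
  have "g - L \<in> ?G" if "0 < g - L"
    by (rule lattice_point_in_grid_points[OF pred that]) (use g L in linarith)
  moreover have "g + L \<in> ?G" if "g + L < real T"
    by (rule lattice_point_in_grid_points[OF succ _ that]) (use g L in linarith)
  ultimately have "max 0 (g - L) \<in> ?G" "min (real T) (g + L) \<in> ?G"
    unfolding max_def min_def by (auto simp: grid_points_def)
  moreover have "\<not> (max 0 (g - L) < x \<and> x < g) \<and> \<not> (g < x \<and> x < min (real T) (g + L))"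
    if "x \<in> ?G" for x
    using that
  proof (cases rule: grid_points_cases)
    case (3 w)
    then show ?thesis
      using lattice_gap[OF L, of r0 "z - 1" w] lattice_gap[OF L, of r0 z w] g(1)
      unfolding L_def by (auto simp: algebra_simps)
  qed (use g in auto)
  ultimately show "{max 0 (g - L)..g} \<in> partition_level T q r0 i"
    and "{g..min (real T) (g + L)} \<in> partition_level T q r0 i"
    using gG g L unfolding partition_level_def by (fastforce simp: max_def min_def)+
qed

lemma grid_point_between_if_two_cells:
  assumes A: "A \<in> partition_level T q r0 i" and B: "B \<in> partition_level T q r0 i" and "A \<noteq> B"
    and pos: "0 < measure lborel ({a..b} \<inter> A)" "0 < measure lborel ({a..b} \<inter> B)"
  shows "\<exists>x\<in>grid_points T q r0 i. a < x \<and> x < b"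
proof -
  let ?G = "grid_points T q r0 i"
  obtain a1 b1 where A': "A = {a1..b1}" "a1 \<in> ?G" "b1 \<in> ?G" "a1 < b1" "\<forall>x\<in>?G. \<not> (a1 < x \<and> x < b1)"
    using A unfolding partition_level_def by blast
  obtain a2 b2 where B': "B = {a2..b2}" "a2 \<in> ?G" "b2 \<in> ?G" "a2 < b2" "\<forall>x\<in>?G. \<not> (a2 < x \<and> x < b2)"
    using B unfolding partition_level_def by blast
  have "max a a1 < min b b1" "max a a2 < min b b2"
    using pos unfolding A'(1) B'(1) measure_Int_atLeastAtMost_pos_iff by simp_all
  \<comment> \<open>Distinct cells do not overlap, so the right end of the left one lies inside (a, b).\<close>
  moreover have "b1 \<le> a2 \<or> b2 \<le> a1"
    using \<open>A \<noteq> B\<close> A' B' by (metis linorder_neqE_linordered_idom not_less)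
  ultimately show ?thesis using A'(3) B'(3) by auto
qed

lemma two_cells_iff_lattice_point_between:
  assumes "ell T q i > 0" and "0 \<le> a" "b \<le> real T"
  shows "(\<exists>A\<in>partition_level T q r0 i. \<exists>B\<in>partition_level T q r0 i. A \<noteq> B \<and>
            0 < measure lborel ({a..b} \<inter> A) \<and> 0 < measure lborel ({a..b} \<inter> B))
     \<longleftrightarrow> lattice_point_between (ell T q i) r0 a b"
proof
  assume "\<exists>A\<in>partition_level T q r0 i. \<exists>B\<in>partition_level T q r0 i. A \<noteq> B \<and>
            0 < measure lborel ({a..b} \<inter> A) \<and> 0 < measure lborel ({a..b} \<inter> B)"
  then obtain x where "x \<in> grid_points T q r0 i" "a < x" "x < b"
    using grid_point_between_if_two_cells by blast
  then show "lattice_point_between (ell T q i) r0 a b"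
    using assms unfolding lattice_point_between_def by (cases rule: grid_points_cases) auto
next
  let ?L = "ell T q i"
  assume "lattice_point_between ?L r0 a b"
  then obtain z :: int where z: "a < r0 + of_int z * ?L" "r0 + of_int z * ?L < b"
    unfolding lattice_point_between_def by blast
  define g where "g = r0 + of_int z * ?L"
  have g: "0 < g" "g < real T" using z assms unfolding g_def by linarith+
  have "{max 0 (g - ?L)..g} \<noteq> {g..min (real T) (g + ?L)}"
    using g assms(1) by auto
  moreover have "0 < measure lborel ({a..b} \<inter> {max 0 (g - ?L)..g})"
    "0 < measure lborel ({a..b} \<inter> {g..min (real T) (g + ?L)})"
    unfolding measure_Int_atLeastAtMost_pos_iff using z g assms(1) unfolding g_def by auto
  ultimately show "\<exists>A\<in>partition_level T q r0 i. \<exists>B\<in>partition_level T q r0 i. A \<noteq> B \<and>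
            0 < measure lborel ({a..b} \<inter> A) \<and> 0 < measure lborel ({a..b} \<inter> B)"
    using cells_around_lattice_point[OF assms(1) g_def g] by blast
qed

lemma ell_pos: "T > 0 \<Longrightarrow> q > 0 \<Longrightarrow> ell T q i > 0"
  by (simp add: ell_def)

lemma ell_Suc: "ell T q (Suc i) = ell T q i / real q"
  by (simp add: ell_def field_simps)

lemma power_mult_ell: "q > 0 \<Longrightarrow> real q ^ n * ell T q (n + i) = ell T q i"
  by (simp add: ell_def power_add field_simps)

lemma ell_antimono:
  assumes "T > 0" "q \<ge> 1" "i \<le> i'"
  shows "ell T q i' \<le> ell T q i"
proof -
  have "real q ^ (i + 1) \<le> real q ^ (i' + 1)" using assms by (intro power_increasing) auto
  then show ?thesis using assms unfolding ell_def by (intro divide_left_mono) auto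
qed

lemma ell_level_unique:
  assumes "T > 0" "q \<ge> 1" "1 \<le> i" "1 \<le> i'"
    and "ell T q i \<le> x" "x < ell T q (i - 1)" "ell T q i' \<le> x" "x < ell T q (i' - 1)"
  shows "i = i'"
proof (rule ccontr)
  assume "i \<noteq> i'"
  then have "i \<le> i' - 1 \<or> i' \<le> i - 1" by linarith
  then show False using ell_antimono[OF assms(1,2)] assms(5-8) by (meson not_le order_trans)
qed

lemma position_crossing_iff_lattice_point_between:
  assumes "T > 0" "q > 0" "0 \<le> s j" "s j + of_int (p j) \<le> real T"
  shows "position_crossing T q k r0 s p j \<longleftrightarrow>
    (\<exists>i. 2 \<le> i \<and> i \<le> k + 1 \<and> ell T q i \<le> of_int (p j) \<and> of_int (p j) < ell T q (i - 1) \<and>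
        lattice_point_between (ell T q (i - 2)) r0 (s j) (s j + of_int (p j)))"
  unfolding position_crossing_def position_def
  using two_cells_iff_lattice_point_between[OF ell_pos[OF assms(1,2)] assms(3,4)] by simp

lemma open_crossing_offsets:
  assumes "T > 0" "q > 0" "0 \<le> s j" "s j + of_int (p j) \<le> real T"
  shows "open {r0. position_crossing T q k r0 s p j}"
  unfolding position_crossing_iff_lattice_point_between[where s = s and p = p and j = j, OF assms]
  by (intro open_Collect_ex open_Collect_conj open_Collect_const open_lattice_point_between)

lemma measure_crossing_offsets_le:
  assumes T: "T > 0" and q: "q > 0" and j: "0 \<le> s j" "s j + of_int (p j) \<le> real T"
  shows "measure lborel ({0..real T / real q} \<inter> {r0. position_crossing T q k r0 s p j})
           \<le> (real T / real q) / real q"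
proof (cases "\<exists>i. 2 \<le> i \<and> ell T q i \<le> of_int (p j) \<and> of_int (p j) < ell T q (i - 1)")
  case False
  then have "{r0. position_crossing T q k r0 s p j} = {}"
    unfolding position_crossing_iff_lattice_point_between[where s = s and p = p and j = j, OF T q j]
    by blast
  then show ?thesis by simp
next
  case True
  then obtain i where i: "2 \<le> i" "ell T q i \<le> of_int (p j)" "of_int (p j) < ell T q (i - 1)"
    by blast
  define L where "L = ell T q (i - 2)"
  define N where "N = q ^ (i - 2)"
  have L: "L > 0" unfolding L_def using T q by (rule ell_pos)
  have NL: "real N * L = real T / real q"
    using power_mult_ell[OF q, of "i - 2" T 0] unfolding N_def L_def by (simp add: ell_def)
  have "i - 1 = Suc (i - 2)" using i(1) by simp
  then have "ell T q (i - 1) = L / real q" unfolding L_def by (simp only: ell_Suc)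
  then have p: "0 < real_of_int (p j)" "real_of_int (p j) < L / real q"
    using i ell_pos[OF T q, of i] by auto
  moreover have "L / real q \<le> L" using L q by (simp add: divide_le_eq)
  ultimately have pL: "real_of_int (p j) < L" by linarith
  \<comment> \<open>The length of j pins down its level i, so only the grid of level i - 2 matters.\<close>
  have "{0..real T / real q} \<inter> {r0. position_crossing T q k r0 s p j}
      \<subseteq> {0..real N * L} \<inter> {x. lattice_point_between L x (s j) (s j + of_int (p j))}"
  proof
    fix x assume "x \<in> {0..real T / real q} \<inter> {r0. position_crossing T q k r0 s p j}"
    then obtain i' where "2 \<le> i'" "ell T q i' \<le> of_int (p j)" "of_int (p j) < ell T q (i' - 1)"
      and x: "x \<in> {0..real T / real q}"
        "lattice_point_between (ell T q (i' - 2)) x (s j) (s j + of_int (p j))"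
      unfolding position_crossing_iff_lattice_point_between[where s = s and p = p and j = j, OF T q j]
      by blast
    moreover from this have "i' = i" using ell_level_unique[of T q i' i] T q i by simp
    ultimately show "x \<in> {0..real N * L} \<inter> {x. lattice_point_between L x (s j) (s j + of_int (p j))}"
      using NL unfolding L_def by simp
  qed
  then have "measure lborel ({0..real T / real q} \<inter> {r0. position_crossing T q k r0 s p j})
      \<le> measure lborel ({0..real N * L} \<inter> {x. lattice_point_between L x (s j) (s j + of_int (p j))})"
    using open_lattice_point_between open_crossing_offsets[where s = s and p = p and j = j, OF T q j]
    by (intro measure_mono_fmeasurable fmeasurable_Int_fmeasurable fmeasurable_compact) auto
  also have "\<dots> \<le> real N * of_int (p j)"
    using q by (intro measure_lattice_point_between_le[OF L _ p(1) pL]) (simp add: N_def)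
  also have "\<dots> \<le> real N * (L / real q)"
    using p by (intro mult_left_mono) auto
  finally show ?thesis using NL by simp
qed

lemma feasible_schedule_position_within:
  assumes "valid_instance T J r d p" "feasible_schedule m J r d p S mach s" "j \<in> S"
  shows "0 \<le> s j" "s j + of_int (p j) \<le> real T"
proof -
  have "j \<in> J" "of_int (r j) \<le> s j" "s j + of_int (p j) \<le> of_int (d j)"
    using assms(2,3) unfolding feasible_schedule_def by auto
  moreover have "0 \<le> r j" "d j \<le> int T" using assms(1) \<open>j \<in> J\<close> unfolding valid_instance_def by auto
  ultimately show "0 \<le> s j" "s j + of_int (p j) \<le> real T"
    by (simp_all add: order_trans[OF _ of_int_le_iff[THEN iffD2]])
qed

lemma integral_uniform_measure_card_le:
  fixes C :: "'j \<Rightarrow> real set" and l c :: real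
  assumes "finite S" "l > 0" and C: "\<And>j. j \<in> S \<Longrightarrow> C j \<in> sets borel"
    and bound: "\<And>j. j \<in> S \<Longrightarrow> measure lborel ({0..l} \<inter> C j) \<le> c * l"
  shows "integrable (uniform_measure lborel {0..l}) (\<lambda>x. real (card {j \<in> S. x \<in> C j}))
       \<and> (\<integral>x. real (card {j \<in> S. x \<in> C j}) \<partial>uniform_measure lborel {0..l}) \<le> real (card S) * c"
proof -
  let ?M = "uniform_measure lborel {0..l}"
  have card_eq: "real (card {j \<in> S. x \<in> C j}) = (\<Sum>j\<in>S. indicator (C j) x)" for x
    using assms(1) by (simp add: indicator_def sum.If_cases Int_def)
  have "prob_space ?M" using assms(2) by (intro prob_space_uniform_measure) auto
  then have "finite_measure ?M" by (rule prob_space.finite_measure)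
  then have int: "integrable ?M (indicator (C j) :: real \<Rightarrow> real)" if "j \<in> S" for j
    using C[OF that] by (intro finite_measure.integrable_const_bound[where B = 1]) auto
  have "measure ?M (C j) \<le> c" if "j \<in> S" for j
    using assms(2) C[OF that] bound[OF that]
    by (subst measure_uniform_measure) (auto simp: Int_commute divide_le_eq)
  then have "(\<Sum>j\<in>S. measure ?M (C j)) \<le> real (card S) * c"
    using sum_mono[of S "\<lambda>j. measure ?M (C j)" "\<lambda>_. c"] by simp
  moreover have "(\<integral>x. (\<Sum>j\<in>S. indicator (C j) x) \<partial>?M) = (\<Sum>j\<in>S. measure ?M (C j))"
    using C int by (subst Bochner_Integration.integral_sum) auto
  ultimately show ?thesis
    unfolding card_eq using int by auto
qed

theorem mainTheorem7:
  fixes \<epsilon> :: real and q k T m :: nat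
    and J :: "'j set" and r d p :: "'j \<Rightarrow> int"
    and S :: "'j set" and mach :: "'j \<Rightarrow> nat" and s :: "'j \<Rightarrow> real"
  assumes "\<epsilon> > 0" and "real q = 1 / \<epsilon>\<^sup>2" and "T = q ^ k"
    and "valid_instance T J r d p"
    and "feasible_schedule m J r d p S mach s"
  shows "integrable (uniform_measure lborel {0 .. real T / real q})
           (\<lambda>r0. real (card {j \<in> S. position_crossing T q k r0 s p j}))
       \<and> (\<integral>r0. real (card {j \<in> S. position_crossing T q k r0 s p j})
             \<partial>uniform_measure lborel {0 .. real T / real q})
         \<le> real (card S) / real q"
proof -
  have "real q > 0" using assms(1,2) by simp
  then have q: "q > 0" by simp
  then have T: "T > 0" using assms(3) by simp
  have "finite S"
    using assms(4,5) unfolding valid_instance_def feasible_schedule_def by (auto intro: finite_subset)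
  moreover have "real T / real q > 0" using T q by simp
  moreover have "open {r0. position_crossing T q k r0 s p j}"
    and "measure lborel ({0..real T / real q} \<inter> {r0. position_crossing T q k r0 s p j})
           \<le> 1 / real q * (real T / real q)" if "j \<in> S" for j
    using open_crossing_offsets measure_crossing_offsets_le
      feasible_schedule_position_within[OF assms(4,5) that] T q by auto
  ultimately show ?thesis
    using integral_uniform_measure_card_le[of S "real T / real q" "\<lambda>j. {r0. position_crossing T q k r0 s p j}" "1 / real q"]
    by auto
qed

end
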